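(* In the setting described in the context (in particular, the modified 4-player stage game is $\alpha$-strongly monotone for some $\alpha>0$, so every stage game has a unique RQE), suppose the risk-averse quantal-response Bellman operator $\mathcal{T}$ has a unique fixed point $\mathbf{Q}^*$. Define the Markov policy $\pi^*$ state-wise by letting $\pi^*(\cdot\mid s)$ be the unique RQE of the stage game with payoff matrix pair $\mathbf{Q}^*(s,\cdot)$. Then $\pi^*$ is a stationary Markov RQE of the Markov game.
   Context: A discounted two-player Markov game has a finite state space $\mathcal{S}$, finite action sets $\mathcal{A}_1,\mathcal{A}_2$ with $\mathcal{A}=\mathcal{A}_1\times\mathcal{A}_2$, deterministic rewards $r_i:\mathcal{S}\times\mathcal{A}\to[0,1]$, discount factor $\gamma\in[0,1)$ and transition kernel $P(\cdot\mid s,\mathbf{a})\in\Delta_{\mathcal{S}}$; $-i$ denotes the other player, $\Delta_n$ the probability simplex in $\mathbb{R}^n$. For each $i$ fix $\epsilon_i>0$, a differentiable strictly convex $\nu_i$ on (a neighbourhood of) $\Delta_{|\mathcal{A}_i|}$, a differentiable $D_i:\Delta_{|\mathcal{A}_{-i}|}\times\Delta_{|\mathcal{A}_{-i}|}\to\mathbb{R}$ convex in its first argument, and an environment penalty $D_i^{\mathrm{env}}:\Delta_{\mathcal{S}}\times\Delta_{\mathcal{S}}\to[0,\infty)$. Stage games: for $\mathbf{R}=(R_1,R_2)$, $R_i\in\mathbb{R}^{|\mathcal{A}_i|\times|\mathcal{A}_{-i}|}$, let $f_i(\pi_i,\pi_{-i};R_i)=\sup_{p_i\in\Delta_{|\mathcal{A}_{-i}|}}[-\pi_i^TR_ip_i-D_i(p_i,\pi_{-i})]+\epsilon_i\nu_i(\pi_i)$;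 an RQE is $(\pi_1^*,\pi_2^* )$ with $f_i(\pi_i^*,\pi_{-i}^*;R_i)\le f_i(\pi_i,\pi_{-i}^*;R_i)$ for all $\pi_i$, $i=1,2$, and for the unique RQE $\texttt{RQE}_i(\mathbf{R}):=f_i(\pi_i^*,\pi_{-i}^*;R_i)$. The modified 4-player game with $z=(\pi_1,\pi_2,p_1,p_2)\in\mathcal{Z}=\Delta_{|\mathcal{A}_1|}\times\Delta_{|\mathcal{A}_2|}\times\Delta_{|\mathcal{A}_2|}\times\Delta_{|\mathcal{A}_1|}$ has gradient operator $F(z;\mathbf{R})=(-R_1p_1+\epsilon_1\nabla\nu_1(\pi_1),\,-R_2p_2+\epsilon_2\nabla\nu_2(\pi_2),\,R_1^T\pi_1+\nabla_{p_1}D_1(p_1,\pi_2),\,R_2^T\pi_2+\nabla_{p_2}D_2(p_2,\pi_1))$ and is $\alpha$-strongly monotone if $(z-z')^T(F(z;\mathbf{R})-F(z';\mathbf{R}))\ge\alpha\|z-z'\|_2^2$ for all $z,z'$ (independent of $\mathbf{R}$). For a $Q$ function pair $\mathbf{Q}=(Q_1,Q_2)$, $Q_i:\mathcal{S}\times\mathcal{A}\to\mathbb{R}$, $\mathbf{Q}(s,\cdot)$ is the stage payoff pair with $[Q_i(s,\cdot)]_{mn}=Q_i(s,(a_i=m,a_{-i}=n))$, and $(\mathcal{T}\mathbf{Q})_i(s,\mathbf{a})=r_i(s,\mathbf{a})+\gamma\inf_{\widetilde P\in\Delta_{\mathcal{S}}}\{-\mathbb{E}_{s'\sim\widetilde P}[\texttt{RQE}_i(\mathbf{Q}(s',\cdot))]+D_i^{\mathrm{env}}(\widetilde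 P,P(\cdot\mid s,\mathbf{a}))\}$. For a Markov policy pair $\pi=(\pi_1,\pi_2)$, $\pi_i:\mathcal{S}\to\Delta_{|\mathcal{A}_i|}$, the value and $Q$ functions $V_i^{\epsilon_i,\pi}$, $Q_i^{\epsilon_i,\pi}$ are defined jointly by $V_i^{\epsilon_i,\pi}(s)=-f_i(\pi_i(s),\pi_{-i}(s);Q_i^{\epsilon_i,\pi}(s,\cdot))$ and $Q_i^{\epsilon_i,\pi}(s,\mathbf{a})=r_i(s,\mathbf{a})+\gamma\inf_{\widetilde P\in\Delta_{\mathcal{S}}}\{\mathbb{E}_{s'\sim\widetilde P}V_i^{\epsilon_i,\pi}(s')+D_i^{\mathrm{env}}(\widetilde P,P(\cdot\mid s,\mathbf{a}))\}$. A pair $\pi^*$ is a stationary Markov RQE if for both $i$ and all $s\in\mathcal{S}$, $V_i^{\epsilon_i,\pi^*}(s)\ge V_i^{\epsilon_i,(\pi_i,\pi_{-i}^* )}(s)$ for every Markov policy $\pi_i:\mathcal{S}\to\Delta_{|\mathcal{A}_i|}$. *)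

theory Defs
  imports "HOL-Analysis.Analysis"
begin

definition prob_simplex :: "(real^'n) set" where
  "prob_simplex = {p. (\<forall>i. 0 \<le> p $ i) \<and> (\<Sum>i\<in>UNIV. p $ i) = 1}"

definition strictly_convex_on :: "'a::real_vector set \<Rightarrow> ('a \<Rightarrow> real) \<Rightarrow> bool" where
  "strictly_convex_on S f \<longleftrightarrow> convex S \<and>
     (\<forall>x\<in>S. \<forall>y\<in>S. x \<noteq> y \<longrightarrow> (\<forall>u::real. 0 < u \<and> u < 1 \<longrightarrow>
        f (u *\<^sub>R x + (1 - u) *\<^sub>R y) < u * f x + (1 - u) * f y))"

record ('s, 'a1, 'a2) mgame =
  rew1  :: "'s \<Rightarrow> 'a1 \<times> 'a2 \<Rightarrow> real"
  rew2  :: "'s \<Rightarrow> 'a1 \<times> 'a2 \<Rightarrow> real"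
  disc  :: real
  trans :: "'s \<Rightarrow> 'a1 \<times> 'a2 \<Rightarrow> real^'s::finite"
  eps1  :: real
  eps2  :: real
  nu1   :: "real^'a1::finite \<Rightarrow> real"
  nu2   :: "real^'a2::finite \<Rightarrow> real"
  D1    :: "real^'a2 \<Rightarrow> real^'a2 \<Rightarrow> real"
  D2    :: "real^'a1 \<Rightarrow> real^'a1 \<Rightarrow> real"
  Denv1 :: "real^'s \<Rightarrow> real^'s \<Rightarrow> real"
  Denv2 :: "real^'s \<Rightarrow> real^'s \<Rightarrow> real"

text \<open>Stage cost f_i(pi_i, pi_{-i}; R_i) for a player with own action type 'a and opponent
  action type 'b; R has rows indexed by own actions, columns by opponent actions.\<close>
definition stage_cost ::
  "real \<Rightarrow> (real^'a::finite \<Rightarrow> real) \<Rightarrow> (real^'b::finite \<Rightarrow> real^'b \<Rightarrow> real)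
    \<Rightarrow> real^'b^'a \<Rightarrow> real^'a \<Rightarrow> real^'b \<Rightarrow> real" where
  "stage_cost eps nu D R pii pimi =
     (SUP p\<in>prob_simplex. - (pii \<bullet> (R *v p)) - D p pimi) + eps * nu pii"

definition f1 :: "('s::finite, 'a1::finite, 'a2::finite) mgame \<Rightarrow> real^'a2^'a1 \<Rightarrow> real^'a1 \<Rightarrow> real^'a2 \<Rightarrow> real" where
  "f1 G = stage_cost (eps1 G) (nu1 G) (D1 G)"

definition f2 :: "('s::finite, 'a1::finite, 'a2::finite) mgame \<Rightarrow> real^'a1^'a2 \<Rightarrow> real^'a2 \<Rightarrow> real^'a1 \<Rightarrow> real" where
  "f2 G = stage_cost (eps2 G) (nu2 G) (D2 G)"

definition is_RQE :: "('s::finite, 'a1::finite, 'a2::finite) mgame \<Rightarrow> real^'a2^'a1 \<Rightarrow> real^'a1^'a2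
    \<Rightarrow> real^'a1 \<Rightarrow> real^'a2 \<Rightarrow> bool" where
  "is_RQE G R1 R2 x1 x2 \<longleftrightarrow> x1 \<in> prob_simplex \<and> x2 \<in> prob_simplex \<and>
     (\<forall>y\<in>prob_simplex. f1 G R1 x1 x2 \<le> f1 G R1 y x2) \<and>
     (\<forall>y\<in>prob_simplex. f2 G R2 x2 x1 \<le> f2 G R2 y x1)"

definition RQE1 :: "('s::finite, 'a1::finite, 'a2::finite) mgame \<Rightarrow> real^'a2^'a1 \<Rightarrow> real^'a1^'a2 \<Rightarrow> real" where
  "RQE1 G R1 R2 = (case THE x. is_RQE G R1 R2 (fst x) (snd x) of (x1, x2) \<Rightarrow> f1 G R1 x1 x2)"

definition RQE2 :: "('s::finite, 'a1::finite, 'a2::finite) mgame \<Rightarrow> real^'a2^'a1 \<Rightarrow> real^'a1^'a2 \<Rightarrow> real" where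
  "RQE2 G R1 R2 = (case THE x. is_RQE G R1 R2 (fst x) (snd x) of (x1, x2) \<Rightarrow> f2 G R2 x2 x1)"

text \<open>Stage payoff matrices Q_i(s,.): [Q_i(s,.)]_{mn} = Q_i(s,(a_i = m, a_{-i} = n)).\<close>
definition mat1 :: "('s \<Rightarrow> 'a1::finite \<times> 'a2::finite \<Rightarrow> real) \<Rightarrow> 's \<Rightarrow> real^'a2^'a1" where
  "mat1 Q s = (\<chi> m n. Q s (m, n))"

definition mat2 :: "('s \<Rightarrow> 'a1::finite \<times> 'a2::finite \<Rightarrow> real) \<Rightarrow> 's \<Rightarrow> real^'a1^'a2" where
  "mat2 Q s = (\<chi> m n. Q s (n, m))"

definition bellman :: "('s::finite, 'a1::finite, 'a2::finite) mgame
    \<Rightarrow> ('s \<Rightarrow> 'a1 \<times> 'a2 \<Rightarrow> real) \<times> ('s \<Rightarrow> 'a1 \<times> 'a2 \<Rightarrow> real)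
    \<Rightarrow> ('s \<Rightarrow> 'a1 \<times> 'a2 \<Rightarrow> real) \<times> ('s \<Rightarrow> 'a1 \<times> 'a2 \<Rightarrow> real)" where
  "bellman G Q =
    ((\<lambda>s a. rew1 G s a + disc G *
        (INF Pt\<in>prob_simplex. - (\<Sum>s'\<in>UNIV. Pt $ s' * RQE1 G (mat1 (fst Q) s') (mat2 (snd Q) s'))
                         + Denv1 G Pt (trans G s a))),
     (\<lambda>s a. rew2 G s a + disc G *
        (INF Pt\<in>prob_simplex. - (\<Sum>s'\<in>UNIV. Pt $ s' * RQE2 G (mat1 (fst Q) s') (mat2 (snd Q) s'))
                         + Denv2 G Pt (trans G s a))))"

definition polQ :: "real \<Rightarrow> ('s::finite \<Rightarrow> 'a1 \<times> 'a2 \<Rightarrow> real) \<Rightarrow> ('s \<Rightarrow> 'a1 \<times> 'a2 \<Rightarrow> real^'s)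
    \<Rightarrow> (real^'s \<Rightarrow> real^'s \<Rightarrow> real) \<Rightarrow> (('s \<Rightarrow> 'a1 \<times> 'a2 \<Rightarrow> real) \<Rightarrow> 's \<Rightarrow> 'm)
    \<Rightarrow> ('m \<Rightarrow> 'x \<Rightarrow> 'y \<Rightarrow> real) \<Rightarrow> ('s \<Rightarrow> 'x) \<Rightarrow> ('s \<Rightarrow> 'y) \<Rightarrow> ('s \<Rightarrow> 'a1 \<times> 'a2 \<Rightarrow> real)" where
  "polQ gamma r P Denv M f pii pimi =
     (THE Q. \<forall>s a. Q s a = r s a + gamma *
        (INF Pt\<in>prob_simplex. (\<Sum>s'\<in>UNIV. Pt $ s' * (- f (M Q s') (pii s') (pimi s'))) + Denv Pt (P s a)))"

definition polV :: "real \<Rightarrow> ('s::finite \<Rightarrow> 'a1 \<times> 'a2 \<Rightarrow> real) \<Rightarrow> ('s \<Rightarrow> 'a1 \<times> 'a2 \<Rightarrow> real^'s)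
    \<Rightarrow> (real^'s \<Rightarrow> real^'s \<Rightarrow> real) \<Rightarrow> (('s \<Rightarrow> 'a1 \<times> 'a2 \<Rightarrow> real) \<Rightarrow> 's \<Rightarrow> 'm)
    \<Rightarrow> ('m \<Rightarrow> 'x \<Rightarrow> 'y \<Rightarrow> real) \<Rightarrow> ('s \<Rightarrow> 'x) \<Rightarrow> ('s \<Rightarrow> 'y) \<Rightarrow> 's \<Rightarrow> real" where
  "polV gamma r P Denv M f pii pimi s = - f (M (polQ gamma r P Denv M f pii pimi) s) (pii s) (pimi s)"

definition V1 :: "('s::finite, 'a1::finite, 'a2::finite) mgame \<Rightarrow> ('s \<Rightarrow> real^'a1) \<Rightarrow> ('s \<Rightarrow> real^'a2) \<Rightarrow> 's \<Rightarrow> real" where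
  "V1 G pi1 pi2 = polV (disc G) (rew1 G) (trans G) (Denv1 G) mat1 (f1 G) pi1 pi2"

definition V2 :: "('s::finite, 'a1::finite, 'a2::finite) mgame \<Rightarrow> ('s \<Rightarrow> real^'a1) \<Rightarrow> ('s \<Rightarrow> real^'a2) \<Rightarrow> 's \<Rightarrow> real" where
  "V2 G pi1 pi2 = polV (disc G) (rew2 G) (trans G) (Denv2 G) mat2 (f2 G) pi2 pi1"

definition markov_policy :: "('s \<Rightarrow> real^'a::finite) \<Rightarrow> bool" where
  "markov_policy pol \<longleftrightarrow> (\<forall>s. pol s \<in> prob_simplex)"

definition is_markov_RQE :: "('s::finite, 'a1::finite, 'a2::finite) mgame \<Rightarrow> ('s \<Rightarrow> real^'a1) \<Rightarrow> ('s \<Rightarrow> real^'a2) \<Rightarrow> bool" where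
  "is_markov_RQE G pi1 pi2 \<longleftrightarrow> markov_policy pi1 \<and> markov_policy pi2 \<and>
     (\<forall>pi1'. markov_policy pi1' \<longrightarrow> (\<forall>s. V1 G pi1 pi2 s \<ge> V1 G pi1' pi2 s)) \<and>
     (\<forall>pi2'. markov_policy pi2' \<longrightarrow> (\<forall>s. V2 G pi1 pi2 s \<ge> V2 G pi1 pi2' s))"

text \<open>alpha-strong monotonicity of the modified 4-player game gradient operator F(z;R),
  for all payoff pairs R, given gradient maps gnu1, gnu2 of nu1, nu2 and partial gradients
  gD1, gD2 of D1, D2 with respect to their first argument.\<close>
definition strongly_monotone ::
  "('s::finite, 'a1::finite, 'a2::finite) mgame \<Rightarrow> (real^'a1 \<Rightarrow> real^'a1) \<Rightarrow> (real^'a2 \<Rightarrow> real^'a2)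
    \<Rightarrow> (real^'a2 \<Rightarrow> real^'a2 \<Rightarrow> real^'a2) \<Rightarrow> (real^'a1 \<Rightarrow> real^'a1 \<Rightarrow> real^'a1) \<Rightarrow> real \<Rightarrow> bool" where
  "strongly_monotone G gnu1 gnu2 gD1 gD2 alpha \<longleftrightarrow>
    (\<forall>(R1::real^'a2^'a1) (R2::real^'a1^'a2).
     \<forall>x1\<in>prob_simplex. \<forall>x2\<in>prob_simplex. \<forall>p1\<in>prob_simplex. \<forall>p2\<in>prob_simplex.
     \<forall>y1\<in>prob_simplex. \<forall>y2\<in>prob_simplex. \<forall>q1\<in>prob_simplex. \<forall>q2\<in>prob_simplex.
       (x1 - y1) \<bullet> ((- (R1 *v p1) + eps1 G *\<^sub>R gnu1 x1) - (- (R1 *v q1) + eps1 G *\<^sub>R gnu1 y1))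
     + (x2 - y2) \<bullet> ((- (R2 *v p2) + eps2 G *\<^sub>R gnu2 x2) - (- (R2 *v q2) + eps2 G *\<^sub>R gnu2 y2))
     + (p1 - q1) \<bullet> ((transpose R1 *v x1 + gD1 p1 x2) - (transpose R1 *v y1 + gD1 q1 y2))
     + (p2 - q2) \<bullet> ((transpose R2 *v x2 + gD2 p2 x1) - (transpose R2 *v y2 + gD2 q2 y1))
     \<ge> alpha * ((norm (x1 - y1))\<^sup>2 + (norm (x2 - y2))\<^sup>2 + (norm (p1 - q1))\<^sup>2 + (norm (p2 - q2))\<^sup>2))"

end

theory Submission
  imports Defs
begin

text \<open>Strong monotonicity of the modified four-player game makes every stage RQE unique:
  the first-order conditions of two equilibria (the adversaries' maximisers being supplied by
  Danskin's argument) add up to a nonpositive quantity that is bounded below by alpha times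
  their squared distance. Hence RQE_i(Q*(s,.)) is the stage cost of pi* at Q*, and Q* is the
  fixed point of the policy evaluation operators of pi*. These operators are monotone and
  shift constants by the discount factor (Blackwell's conditions), so their fixed points are
  unique and obey a comparison principle. Since pi*_i is a best response at every state, the
  evaluation operator of any other policy pi_i maps Q*_i below itself; its fixed point, the Q
  function of (pi_i, pi*_-i), therefore lies below Q*_i, and so does the value.\<close>

section \<open>The probability simplex\<close>

lemma prob_simplex_nonempty: "prob_simplex \<noteq> ({} :: (real^'n::finite) set)"
proof -
  have "(\<chi> i. 1 / real CARD('n)) \<in> (prob_simplex :: (real^'n) set)"
    unfolding prob_simplex_def by simp
  then show ?thesis by blast
qed

lemma compact_prob_simplex: "compact (prob_simplex :: (real^'n::finite) set)"
proof -
  have closed: "closed (prob_simplex :: (real^'n) set)"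
  proof -
    have "prob_simplex = (\<Inter>i. {p::real^'n. 0 \<le> p $ i}) \<inter> {p. (\<Sum>i\<in>UNIV. p $ i) = 1}"
      unfolding prob_simplex_def by auto
    moreover have "closed {p::real^'n. (\<Sum>i\<in>UNIV. p $ i) = 1}"
      by (rule closed_Collect_eq) (auto intro!: continuous_intros)
    moreover have "closed {p::real^'n. 0 \<le> p $ i}" for i
      by (rule closed_Collect_le) (auto intro!: continuous_intros)
    ultimately show ?thesis by (metis closed_INT closed_Int)
  qed
  have "bounded (prob_simplex :: (real^'n) set)"
    unfolding bounded_iff
  proof (intro exI ballI)
    fix x :: "real^'n" assume "x \<in> prob_simplex"
    then have "(\<Sum>i\<in>UNIV. \<bar>x $ i\<bar>) = 1" unfolding prob_simplex_def by auto
    then show "norm x \<le> 1" using norm_le_l1_cart[of x] by simp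
  qed
  with closed show ?thesis using compact_eq_bounded_closed by blast
qed

lemma convex_prob_simplex: "convex (prob_simplex :: (real^'n::finite) set)"
  unfolding convex_def prob_simplex_def
  by (auto simp: sum.distrib sum_distrib_left[symmetric])

lemma prob_simplex_sum: "p \<in> prob_simplex \<Longrightarrow> (\<Sum>i\<in>UNIV. p $ i) = 1"
  and prob_simplex_nonneg: "p \<in> prob_simplex \<Longrightarrow> 0 \<le> p $ i"
  unfolding prob_simplex_def by auto

lemma prob_simplex_segment:
  assumes "p \<in> prob_simplex" "p' \<in> prob_simplex" "0 \<le> t" "t \<le> 1"
  shows "p + t *\<^sub>R (p' - p) \<in> prob_simplex"
proof -
  have "p + t *\<^sub>R (p' - p) = (1 - t) *\<^sub>R p + t *\<^sub>R p'" by (simp add: algebra_simps)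
  then show ?thesis
    using convex_prob_simplex[unfolded convex_def, rule_format, of p p' "1 - t" t] assms by simp
qed

lemma prob_simplex_expectation_add_const:
  fixes v :: "'n::finite \<Rightarrow> real"
  assumes "P \<in> prob_simplex"
  shows "(\<Sum>s\<in>UNIV. P $ s * (v s + c)) = (\<Sum>s\<in>UNIV. P $ s * v s) + c"
  using prob_simplex_sum[OF assms]
  by (simp add: ring_distribs sum.distrib sum_distrib_right[symmetric])

lemma prob_simplex_expectation_mono:
  fixes v w :: "'n::finite \<Rightarrow> real"
  assumes "P \<in> prob_simplex" "\<And>s. v s \<le> w s"
  shows "(\<Sum>s\<in>UNIV. P $ s * v s) \<le> (\<Sum>s\<in>UNIV. P $ s * w s)"
  by (intro sum_mono mult_left_mono prob_simplex_nonneg assms)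


section \<open>Operators satisfying Blackwell's conditions\<close>

definition blackwell :: "real \<Rightarrow> (('s \<Rightarrow> 'c \<Rightarrow> real) \<Rightarrow> 's \<Rightarrow> 'c \<Rightarrow> real) \<Rightarrow> bool" where
  "blackwell g T \<longleftrightarrow> mono T \<and> (\<forall>Q c. T (\<lambda>s a. Q s a + c) = (\<lambda>s a. T Q s a + g * c))"

lemma blackwellD:
  assumes "blackwell g T"
  shows blackwell_mono: "Q \<le> Q' \<Longrightarrow> T Q \<le> T Q'"
    and blackwell_shift: "T (\<lambda>s a. Q s a + c) = (\<lambda>s a. T Q s a + g * c)"
  using assms unfolding blackwell_def by (simp_all add: monoD)

lemma blackwell_fixpoint_le:
  fixes T :: "('s::finite \<Rightarrow> 'c::finite \<Rightarrow> real) \<Rightarrow> 's \<Rightarrow> 'c \<Rightarrow> real"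
  assumes T: "blackwell g T" and g: "0 \<le> g" "g < 1"
    and fixpoint: "T Q' = Q'" and super: "T Q \<le> Q"
  shows "Q' \<le> Q"
proof -
  define m where "m = Max (range (\<lambda>(s, a). Q' s a - Q s a))"
  have le: "Q' \<le> (\<lambda>s a. Q s a + m)"
  proof (intro le_funI)
    fix s a
    have "Q' s a - Q s a \<le> m" unfolding m_def by (rule Max_ge) auto
    then show "Q' s a \<le> Q s a + m" by simp
  qed
  obtain s0 a0 where attained: "Q' s0 a0 - Q s0 a0 = m"
    unfolding m_def using Max_in[of "range (\<lambda>(s, a). Q' s a - Q s a)"] by fastforce
  have "Q' s0 a0 = T Q' s0 a0" using fixpoint by simp
  also have "\<dots> \<le> T (\<lambda>s a. Q s a + m) s0 a0"
    using blackwell_mono[OF T le] by (simp add: le_fun_def)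
  also have "\<dots> = T Q s0 a0 + g * m" by (simp add: blackwell_shift[OF T])
  also have "\<dots> \<le> Q s0 a0 + g * m" using super by (simp add: le_fun_def)
  finally have "m \<le> g * m" using attained by simp
  then have "(1 - g) * m \<le> 0" by (simp add: algebra_simps)
  with g have "m \<le> 0" by (simp add: mult_le_0_iff)
  show ?thesis
  proof (intro le_funI)
    fix s a
    have "Q' s a \<le> Q s a + m" using le by (simp add: le_fun_def)
    with \<open>m \<le> 0\<close> show "Q' s a \<le> Q s a" by linarith
  qed
qed

lemma blackwell_fixpoint_unique:
  fixes T :: "('s::finite \<Rightarrow> 'c::finite \<Rightarrow> real) \<Rightarrow> 's \<Rightarrow> 'c \<Rightarrow> real"
  assumes "blackwell g T" "0 \<le> g" "g < 1" "T Q = Q" "T Q' = Q'"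
  shows "Q = Q'"
proof -
  have "Q' \<le> Q" by (rule blackwell_fixpoint_le[OF assms(1-3,5)]) (simp add: assms(4))
  moreover have "Q \<le> Q'" by (rule blackwell_fixpoint_le[OF assms(1-3,4)]) (simp add: assms(5))
  ultimately show ?thesis by (rule order_antisym[rotated])
qed

lemma blackwell_constant_sub_super_solutions:
  fixes T :: "('s::finite \<Rightarrow> 'c::finite \<Rightarrow> real) \<Rightarrow> 's \<Rightarrow> 'c \<Rightarrow> real"
  assumes T: "blackwell g T" and g: "0 \<le> g" "g < 1"
  obtains h where "0 \<le> h" "(\<lambda>_ _. - h) \<le> T (\<lambda>_ _. - h)" "T (\<lambda>_ _. h) \<le> (\<lambda>_ _. h)"
proof -
  have const: "T (\<lambda>_ _. c) s a = T (\<lambda>_ _. 0) s a + g * c" for c s a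
    using blackwell_shift[OF T, of "\<lambda>_ _. 0" c] by simp
  define B where "B = Max (range (\<lambda>(s, a). \<bar>T (\<lambda>_ _. 0) s a\<bar>))"
  have B: "\<bar>T (\<lambda>_ _. 0) s a\<bar> \<le> B" for s a
    unfolding B_def by (rule Max_ge) auto
  define h where "h = B / (1 - g)"
  have h: "B + g * h = h" "0 \<le> h"
    using g B[of undefined undefined] unfolding h_def by (auto simp: field_simps)
  have "(\<lambda>_ _. - h) \<le> T (\<lambda>_ _. - h)"
  proof (intro le_funI)
    fix s a show "- h \<le> T (\<lambda>_ _. - h) s a"
      using const[of "- h" s a] B[of s a] h(1) unfolding abs_le_iff by linarith
  qed
  moreover have "T (\<lambda>_ _. h) \<le> (\<lambda>_ _. h)"
  proof (intro le_funI)
    fix s a show "T (\<lambda>_ _. h) s a \<le> h"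
      using const[of h s a] B[of s a] h(1) unfolding abs_le_iff by linarith
  qed
  ultimately show ?thesis using that h(2) by blast
qed

text \<open>The fixed point is the supremum of the subsolutions Q \<le> T Q lying between two
  constant sub- and supersolutions.\<close>

lemma blackwell_fixpoint_exists:
  fixes T :: "('s::finite \<Rightarrow> 'c::finite \<Rightarrow> real) \<Rightarrow> 's \<Rightarrow> 'c \<Rightarrow> real"
  assumes T: "blackwell g T" and g: "0 \<le> g" "g < 1"
  shows "\<exists>Q. T Q = Q"
proof -
  note mono = blackwell_mono[OF T]
  obtain h where h: "0 \<le> h" and lo: "(\<lambda>_ _. - h) \<le> T (\<lambda>_ _. - h)" and hi: "T (\<lambda>_ _. h) \<le> (\<lambda>_ _. h)"
    using blackwell_constant_sub_super_solutions[OF T g] .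
  define S where "S = {Q. (\<lambda>_ _. - h) \<le> Q \<and> Q \<le> (\<lambda>_ _. h) \<and> Q \<le> T Q}"
  have bounds_T: "(\<lambda>_ _. - h) \<le> T Q \<and> T Q \<le> (\<lambda>_ _. h)" if "(\<lambda>_ _. - h) \<le> Q" "Q \<le> (\<lambda>_ _. h)" for Q
    using order_trans[OF lo mono[OF that(1)]] order_trans[OF mono[OF that(2)] hi] by blast
  have bottom: "(\<lambda>_ _. - h) \<in> S" using h lo unfolding S_def by (simp add: le_fun_def)
  then have S: "S \<noteq> {}" by auto
  have bdd: "bdd_above ((\<lambda>Q. Q s a) ` S)" for s a
    by (rule bdd_aboveI[of _ h]) (auto simp: S_def le_fun_def)
  define L where "L = (\<lambda>s a. SUP Q\<in>S. Q s a)"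
  have upper: "Q \<le> L" if "Q \<in> S" for Q
    unfolding L_def le_fun_def using cSUP_upper[OF that bdd] by blast
  have "L \<le> (\<lambda>_ _. h)"
  proof (intro le_funI)
    fix s a
    have "Q s a \<le> h" if "Q \<in> S" for Q using that by (simp add: S_def le_fun_def)
    then show "L s a \<le> h" unfolding L_def by (intro cSUP_least[OF S])
  qed
  moreover have L_sub: "L \<le> T L"
  proof (intro le_funI)
    fix s a
    have "Q s a \<le> T L s a" if "Q \<in> S" for Q
    proof -
      have "Q s a \<le> T Q s a" using that unfolding S_def by (simp add: le_fun_def)
      also have "\<dots> \<le> T L s a" using mono[OF upper[OF that]] by (simp add: le_fun_def)
      finally show ?thesis .
    qed
    then show "L s a \<le> T L s a" unfolding L_def by (intro cSUP_least[OF S]) (simp add: L_def)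
  qed
  ultimately have "T L \<in> S"
    unfolding S_def using bounds_T[OF upper[OF bottom]] mono[OF L_sub] by simp
  then have "T L \<le> L" by (rule upper)
  with L_sub have "T L = L" by (rule order_antisym[rotated])
  then show ?thesis by blast
qed


section \<open>The stage cost as a maximum over adversarial distributions\<close>

definition adversary_payoff :: "real^'v^'u \<Rightarrow> (real^'v \<Rightarrow> real) \<Rightarrow> real^'u \<Rightarrow> real^'v \<Rightarrow> real"
  where "adversary_payoff R d x p = - (x \<bullet> (R *v p)) - d p"

lemma stage_cost_eq_SUP_adversary_payoff:
  "stage_cost eps nu D R x q = (SUP p\<in>prob_simplex. adversary_payoff R (\<lambda>p. D p q) x p) + eps * nu x"
  unfolding stage_cost_def adversary_payoff_def by simp

lemma adversary_best_response_exists: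
  fixes R :: "real^'v::finite^'u::finite"
  assumes "continuous_on prob_simplex d"
  shows "\<exists>p\<in>prob_simplex. \<forall>p'\<in>prob_simplex. adversary_payoff R d x p' \<le> adversary_payoff R d x p"
proof -
  have "continuous_on prob_simplex (\<lambda>p. x \<bullet> (R *v p))"
    by (intro continuous_intros matrix_vector_mult_linear_continuous_on)
  then have "continuous_on prob_simplex (adversary_payoff R d x)"
    unfolding adversary_payoff_def using assms by (intro continuous_intros)
  then show ?thesis
    using continuous_attains_sup[OF compact_prob_simplex prob_simplex_nonempty] by blast
qed

lemma stage_cost_eq_adversary_best_response:
  fixes R :: "real^'v::finite^'u::finite"
  assumes "p \<in> prob_simplex"
    and "\<forall>p'\<in>prob_simplex. adversary_payoff R (\<lambda>p. D p q) x p' \<le> adversary_payoff R (\<lambda>p. D p q) x p"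
  shows "stage_cost eps nu D R x q = adversary_payoff R (\<lambda>p. D p q) x p + eps * nu x"
proof -
  have "(SUP p\<in>prob_simplex. adversary_payoff R (\<lambda>p. D p q) x p) = adversary_payoff R (\<lambda>p. D p q) x p"
    by (rule cSup_eq_maximum) (use assms in auto)
  then show ?thesis by (simp add: stage_cost_eq_SUP_adversary_payoff)
qed

lemma adversary_payoff_le_stage_cost:
  fixes R :: "real^'v::finite^'u::finite"
  assumes "continuous_on prob_simplex (\<lambda>p. D p q)" "p \<in> prob_simplex"
  shows "adversary_payoff R (\<lambda>p. D p q) x p + eps * nu x \<le> stage_cost eps nu D R x q"
proof -
  obtain p0 where "p0 \<in> prob_simplex"
      "\<forall>p'\<in>prob_simplex. adversary_payoff R (\<lambda>p. D p q) x p' \<le> adversary_payoff R (\<lambda>p. D p q) x p0"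
    using adversary_best_response_exists[OF assms(1)] by blast
  then show ?thesis
    using stage_cost_eq_adversary_best_response[of p0 R D q x] assms(2) by auto
qed

lemma inner_matrix_vector_mult_sum:
  "x \<bullet> (R *v p) = (\<Sum>i\<in>UNIV. \<Sum>j\<in>UNIV. x $ i * R $ i $ j * p $ j)"
  unfolding inner_vec_def matrix_vector_mult_def
  by (simp add: sum_distrib_left mult.assoc)

lemma stage_cost_add_const:
  fixes R :: "real^'v::finite^'u::finite"
  assumes D: "continuous_on prob_simplex (\<lambda>p. D p q)" and x: "x \<in> prob_simplex"
  shows "stage_cost eps nu D (R + (\<chi> i j. c)) x q = stage_cost eps nu D R x q - c"
proof -
  have payoff: "adversary_payoff (R + (\<chi> i j. c)) (\<lambda>p. D p q) x p = adversary_payoff R (\<lambda>p. D p q) x p - c"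
    if p: "p \<in> prob_simplex" for p
  proof -
    have "(\<Sum>i\<in>UNIV. \<Sum>j\<in>UNIV. x $ i * c * p $ j) = (\<Sum>i\<in>UNIV. x $ i) * c * (\<Sum>j\<in>UNIV. p $ j)"
      by (simp add: sum_distrib_left[symmetric] sum_distrib_right[symmetric])
    also have "\<dots> = c" using x p by (simp add: prob_simplex_sum)
    finally show ?thesis
      unfolding adversary_payoff_def inner_matrix_vector_mult_sum
      by (simp add: ring_distribs sum.distrib)
  qed
  obtain p0 where p0: "p0 \<in> prob_simplex"
      "\<forall>p\<in>prob_simplex. adversary_payoff R (\<lambda>p. D p q) x p \<le> adversary_payoff R (\<lambda>p. D p q) x p0"
    using adversary_best_response_exists[OF D] by blast
  then have "\<forall>p\<in>prob_simplex. adversary_payoff (R + (\<chi> i j. c)) (\<lambda>p. D p q) x p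
      \<le> adversary_payoff (R + (\<chi> i j. c)) (\<lambda>p. D p q) x p0"
    by (simp add: payoff)
  then have "stage_cost eps nu D (R + (\<chi> i j. c)) x q
      = adversary_payoff (R + (\<chi> i j. c)) (\<lambda>p. D p q) x p0 + eps * nu x"
    by (rule stage_cost_eq_adversary_best_response[where D=D and q=q, OF p0(1)])
  also have "\<dots> = stage_cost eps nu D R x q - c"
    using stage_cost_eq_adversary_best_response[where D=D and q=q, OF p0] payoff[OF p0(1)] by simp
  finally show ?thesis .
qed

lemma stage_cost_antimono:
  fixes R R' :: "real^'v::finite^'u::finite"
  assumes D: "continuous_on prob_simplex (\<lambda>p. D p q)" and x: "x \<in> prob_simplex"
    and le: "\<And>i j. R $ i $ j \<le> R' $ i $ j"
  shows "stage_cost eps nu D R' x q \<le> stage_cost eps nu D R x q"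
proof -
  obtain p0 where p0: "p0 \<in> prob_simplex"
      "\<forall>p\<in>prob_simplex. adversary_payoff R' (\<lambda>p. D p q) x p \<le> adversary_payoff R' (\<lambda>p. D p q) x p0"
    using adversary_best_response_exists[OF D] by blast
  have "x \<bullet> (R *v p0) \<le> x \<bullet> (R' *v p0)"
    unfolding inner_matrix_vector_mult_sum
    by (intro sum_mono mult_right_mono mult_left_mono le prob_simplex_nonneg x p0(1))
  then have "stage_cost eps nu D R' x q \<le> adversary_payoff R (\<lambda>p. D p q) x p0 + eps * nu x"
    using stage_cost_eq_adversary_best_response[where D=D and q=q, OF p0] by (simp add: adversary_payoff_def)
  also have "\<dots> \<le> stage_cost eps nu D R x q"
    by (rule adversary_payoff_le_stage_cost[where D=D and q=q, OF D p0(1)])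
  finally show ?thesis .
qed


section \<open>Robust expectation\<close>

definition robust_expectation :: "(real^'s \<Rightarrow> real^'s \<Rightarrow> real) \<Rightarrow> real^'s \<Rightarrow> ('s::finite \<Rightarrow> real) \<Rightarrow> real"
  where "robust_expectation Denv P v = (INF P'\<in>prob_simplex. (\<Sum>s\<in>UNIV. P' $ s * v s) + Denv P' P)"

lemma bdd_below_robust_expectation:
  fixes v :: "'s::finite \<Rightarrow> real"
  assumes "\<forall>P'\<in>prob_simplex. 0 \<le> Denv P' P"
  shows "bdd_below ((\<lambda>P'. (\<Sum>s\<in>UNIV. P' $ s * v s) + Denv P' P) ` prob_simplex)"
proof (rule bdd_belowI2)
  fix P' :: "real^'s" assume P': "P' \<in> prob_simplex"
  have "Min (range v) = (\<Sum>s\<in>UNIV. P' $ s * (\<lambda>_. Min (range v)) s)"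
    using prob_simplex_expectation_add_const[OF P', of "\<lambda>_. 0"] by simp
  also have "\<dots> \<le> (\<Sum>s\<in>UNIV. P' $ s * v s)"
    by (rule prob_simplex_expectation_mono[OF P']) simp
  finally show "Min (range v) \<le> (\<Sum>s\<in>UNIV. P' $ s * v s) + Denv P' P"
    using assms P' by fastforce
qed

lemma robust_expectation_mono:
  fixes v w :: "'s::finite \<Rightarrow> real"
  assumes "\<forall>P'\<in>prob_simplex. 0 \<le> Denv P' P" "\<And>s. v s \<le> w s"
  shows "robust_expectation Denv P v \<le> robust_expectation Denv P w"
  unfolding robust_expectation_def
proof (rule cINF_mono[OF prob_simplex_nonempty bdd_below_robust_expectation[of Denv P, OF assms(1)]])
  fix P' :: "real^'s" assume P': "P' \<in> prob_simplex"
  then show "\<exists>P''\<in>prob_simplex. (\<Sum>s\<in>UNIV. P'' $ s * v s) + Denv P'' P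
      \<le> (\<Sum>s\<in>UNIV. P' $ s * w s) + Denv P' P"
    using prob_simplex_expectation_mono[OF P' assms(2)] by (intro bexI[OF _ P']) simp
qed

lemma robust_expectation_add_const:
  fixes v :: "'s::finite \<Rightarrow> real"
  assumes "\<forall>P'\<in>prob_simplex. 0 \<le> Denv P' P"
  shows "robust_expectation Denv P (\<lambda>s. v s + c) = c + robust_expectation Denv P v"
proof -
  have "robust_expectation Denv P (\<lambda>s. v s + c)
      = (INF P'\<in>prob_simplex. c + ((\<Sum>s\<in>UNIV. P' $ s * v s) + Denv P' P))"
    unfolding robust_expectation_def
    by (intro INF_cong) (simp_all add: prob_simplex_expectation_add_const)
  also have "\<dots> = c + robust_expectation Denv P v"
    unfolding robust_expectation_def
    by (rule Inf_add_eq[OF bdd_below_robust_expectation[of Denv P, OF assms] prob_simplex_nonempty])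
  finally show ?thesis .
qed


section \<open>Policy evaluation for one player\<close>

definition policy_eval_op :: "real \<Rightarrow> ('s::finite \<Rightarrow> 'c \<Rightarrow> real) \<Rightarrow> ('s \<Rightarrow> 'c \<Rightarrow> real^'s)
    \<Rightarrow> (real^'s \<Rightarrow> real^'s \<Rightarrow> real) \<Rightarrow> (('s \<Rightarrow> 'c \<Rightarrow> real) \<Rightarrow> 's \<Rightarrow> 'm)
    \<Rightarrow> ('m \<Rightarrow> 'x \<Rightarrow> 'y \<Rightarrow> real) \<Rightarrow> ('s \<Rightarrow> 'x) \<Rightarrow> ('s \<Rightarrow> 'y) \<Rightarrow> ('s \<Rightarrow> 'c \<Rightarrow> real) \<Rightarrow> 's \<Rightarrow> 'c \<Rightarrow> real"
  where "policy_eval_op gamma r P Denv M f pii pimi Q =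
    (\<lambda>s a. r s a + gamma * robust_expectation Denv (P s a) (\<lambda>s'. - f (M Q s') (pii s') (pimi s')))"

lemma polQ_eq_THE_fixpoint:
  "polQ gamma r P Denv M f pii pimi = (THE Q. policy_eval_op gamma r P Denv M f pii pimi Q = Q)"
  unfolding polQ_def
  by (rule arg_cong[where f = The])
    (auto simp: fun_eq_iff policy_eval_op_def robust_expectation_def)

locale robust_player =
  fixes gamma :: real
    and r :: "'s::finite \<Rightarrow> 'a1::finite \<times> 'a2::finite \<Rightarrow> real"
    and P :: "'s \<Rightarrow> 'a1 \<times> 'a2 \<Rightarrow> real^'s"
    and Denv :: "real^'s \<Rightarrow> real^'s \<Rightarrow> real"
    and M :: "('s \<Rightarrow> 'a1 \<times> 'a2 \<Rightarrow> real) \<Rightarrow> 's \<Rightarrow> real^'opp::finite^'own::finite"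
    and eps :: real and nu :: "real^'own \<Rightarrow> real" and D :: "real^'opp \<Rightarrow> real^'opp \<Rightarrow> real"
  assumes discount: "0 \<le> gamma" "gamma < 1"
    and Denv_nonneg: "\<And>s a. \<forall>P'\<in>prob_simplex. 0 \<le> Denv P' (P s a)"
    and D_continuous: "\<And>q. q \<in> prob_simplex \<Longrightarrow> continuous_on prob_simplex (\<lambda>p. D p q)"
    and M_add_const: "\<And>Q c s. M (\<lambda>s a. Q s a + c) s = M Q s + (\<chi> i j. c)"
    and M_mono: "\<And>Q Q' s i j. Q \<le> Q' \<Longrightarrow> M Q s $ i $ j \<le> M Q' s $ i $ j"
begin

abbreviation eval_op where "eval_op \<equiv> policy_eval_op gamma r P Denv M (stage_cost eps nu D)"

lemma blackwell_policy_eval_op: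
  assumes pii: "markov_policy pii" and pimi: "markov_policy pimi"
  shows "blackwell gamma (eval_op pii pimi)"
  unfolding blackwell_def
proof
  have pii_s: "pii s \<in> prob_simplex" and pimi_s: "pimi s \<in> prob_simplex" for s
    using pii pimi unfolding markov_policy_def by auto
  show "mono (eval_op pii pimi)"
  proof (rule monoI)
    fix Q Q' :: "'s \<Rightarrow> 'a1 \<times> 'a2 \<Rightarrow> real" assume "Q \<le> Q'"
    then have "- stage_cost eps nu D (M Q s') (pii s') (pimi s')
        \<le> - stage_cost eps nu D (M Q' s') (pii s') (pimi s')" for s'
      using stage_cost_antimono[where D=D and q="pimi s'", OF D_continuous[OF pimi_s] pii_s M_mono]
      by simp
    then have "robust_expectation Denv (P s a) (\<lambda>s'. - stage_cost eps nu D (M Q s') (pii s') (pimi s'))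
        \<le> robust_expectation Denv (P s a) (\<lambda>s'. - stage_cost eps nu D (M Q' s') (pii s') (pimi s'))"
      for s a by (intro robust_expectation_mono Denv_nonneg)
    then show "eval_op pii pimi Q \<le> eval_op pii pimi Q'"
      unfolding policy_eval_op_def le_fun_def using discount by (simp add: mult_left_mono)
  qed
  show "\<forall>Q c. eval_op pii pimi (\<lambda>s a. Q s a + c) = (\<lambda>s a. eval_op pii pimi Q s a + gamma * c)"
  proof (intro allI)
    fix Q :: "'s \<Rightarrow> 'a1 \<times> 'a2 \<Rightarrow> real" and c :: real
    have shifted: "(\<lambda>s'. - stage_cost eps nu D (M (\<lambda>s a. Q s a + c) s') (pii s') (pimi s'))
        = (\<lambda>s'. - stage_cost eps nu D (M Q s') (pii s') (pimi s') + c)"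
      using stage_cost_add_const[where D=D and q="pimi s'" for s', OF D_continuous[OF pimi_s] pii_s]
      by (simp add: M_add_const)
    have add_const: "robust_expectation Denv (P s a) (\<lambda>s'. v s' + c) = c + robust_expectation Denv (P s a) v"
      for s a v by (rule robust_expectation_add_const) (rule Denv_nonneg)
    show "eval_op pii pimi (\<lambda>s a. Q s a + c) = (\<lambda>s a. eval_op pii pimi Q s a + gamma * c)"
      unfolding policy_eval_op_def shifted add_const by (simp add: algebra_simps)
  qed
qed

lemma polQ_eq_fixpoint:
  assumes "markov_policy pii" "markov_policy pimi" and fixpoint: "eval_op pii pimi Q = Q"
  shows "polQ gamma r P Denv M (stage_cost eps nu D) pii pimi = Q"
  unfolding polQ_eq_THE_fixpoint
proof (rule the_equality)
  fix Q' assume "eval_op pii pimi Q' = Q'"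
  then show "Q' = Q"
    by (rule blackwell_fixpoint_unique[OF blackwell_policy_eval_op[OF assms(1,2)] discount _ fixpoint])
qed (rule fixpoint)

text \<open>A policy that is a best response at every state against its own fixed point Q
  dominates every other policy pii': the evaluation operator of pii' maps Q below Q, so
  its fixed point lies below Q.\<close>

lemma polV_best_response:
  assumes pii: "markov_policy pii" and pii': "markov_policy pii'" and pimi: "markov_policy pimi"
    and fixpoint: "eval_op pii pimi Q = Q"
    and best: "\<And>s y. y \<in> prob_simplex \<Longrightarrow>
      stage_cost eps nu D (M Q s) (pii s) (pimi s) \<le> stage_cost eps nu D (M Q s) y (pimi s)"
  shows "polV gamma r P Denv M (stage_cost eps nu D) pii' pimi s
    \<le> polV gamma r P Denv M (stage_cost eps nu D) pii pimi s"
proof -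
  have pii'_s: "pii' s \<in> prob_simplex" and pimi_s: "pimi s \<in> prob_simplex" for s
    using pii' pimi unfolding markov_policy_def by auto
  note blackwell' = blackwell_policy_eval_op[OF pii' pimi]
  obtain Q' where Q': "eval_op pii' pimi Q' = Q'"
    using blackwell_fixpoint_exists[OF blackwell' discount] by blast
  have "eval_op pii' pimi Q \<le> eval_op pii pimi Q"
  proof (intro le_funI)
    fix s a
    have "robust_expectation Denv (P s a) (\<lambda>s'. - stage_cost eps nu D (M Q s') (pii' s') (pimi s'))
      \<le> robust_expectation Denv (P s a) (\<lambda>s'. - stage_cost eps nu D (M Q s') (pii s') (pimi s'))"
      by (intro robust_expectation_mono Denv_nonneg) (simp add: best pii'_s)
    then show "eval_op pii' pimi Q s a \<le> eval_op pii pimi Q s a"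
      unfolding policy_eval_op_def using discount by (simp add: mult_left_mono)
  qed
  then have "Q' \<le> Q"
    using blackwell_fixpoint_le[OF blackwell' discount Q'] fixpoint by simp
  then have "- stage_cost eps nu D (M Q' s) (pii' s) (pimi s) \<le> - stage_cost eps nu D (M Q s) (pii' s) (pimi s)"
    using stage_cost_antimono[where D=D and q="pimi s", OF D_continuous[OF pimi_s] pii'_s M_mono]
    by simp
  also have "\<dots> \<le> - stage_cost eps nu D (M Q s) (pii s) (pimi s)"
    using best[OF pii'_s] by simp
  finally show ?thesis
    unfolding polV_def polQ_eq_fixpoint[OF pii pimi fixpoint] polQ_eq_fixpoint[OF pii' pimi Q'] .
qed

end


section \<open>First-order conditions in the stage game\<close>

lemma has_derivative_imp_directional_derivative:
  fixes f :: "'a::real_inner \<Rightarrow> real"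
  assumes "(f has_derivative (\<lambda>h. g \<bullet> h)) (at z)"
  shows "((\<lambda>t. f (z + t *\<^sub>R v)) has_real_derivative (g \<bullet> v)) (at 0)"
proof -
  have "((\<lambda>t::real. z + t *\<^sub>R v) has_derivative (\<lambda>h. h *\<^sub>R v)) (at 0)"
    by (auto intro!: derivative_eq_intros)
  then have "(f \<circ> (\<lambda>t::real. z + t *\<^sub>R v) has_derivative (\<lambda>h. g \<bullet> h) \<circ> (\<lambda>h. h *\<^sub>R v)) (at 0)"
    by (rule diff_chain_at) (simp add: assms)
  moreover have "(\<lambda>h. g \<bullet> h) \<circ> (\<lambda>h. h *\<^sub>R v) = (*) (g \<bullet> v)"
    by (auto simp: fun_eq_iff)
  ultimately show ?thesis unfolding has_field_derivative_def by (simp add: o_def)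
qed

lemma adversary_best_response_first_order:
  fixes R :: "real^'v::finite^'u::finite"
  assumes p: "p \<in> prob_simplex" and p': "p' \<in> prob_simplex"
    and max: "\<forall>p''\<in>prob_simplex. adversary_payoff R d x p'' \<le> adversary_payoff R d x p"
    and d: "(d has_derivative (\<lambda>h. gd \<bullet> h)) (at p)"
  shows "0 \<le> (p' - p) \<bullet> (transpose R *v x + gd)"
proof -
  define v where "v = p' - p"
  define L where "L = - (x \<bullet> (R *v v)) - gd \<bullet> v"
  define g where "g t = adversary_payoff R d x (p + t *\<^sub>R v)" for t
  have "g = (\<lambda>t. - (x \<bullet> (R *v p)) - t * (x \<bullet> (R *v v)) - d (p + t *\<^sub>R v))"
    unfolding g_def adversary_payoff_def
    by (simp add: fun_eq_iff matrix_vector_right_distrib matrix_vector_mult_scaleR inner_add_right)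
  then have "(g has_real_derivative L) (at 0)"
    unfolding L_def
    by (auto intro!: derivative_eq_intros has_derivative_imp_directional_derivative[OF d])
  have "L \<le> 0"
  proof (rule ccontr)
    assume "\<not> L \<le> 0"
    then obtain e where e: "e > 0" "\<forall>h>0. h < e \<longrightarrow> g 0 < g (0 + h)"
      using DERIV_pos_inc_right[OF \<open>(g has_real_derivative L) (at 0)\<close>] by force
    define h where "h = min (e / 2) 1"
    have h: "0 < h" "h < e" "h \<le> 1" using e unfolding h_def by auto
    have "p + h *\<^sub>R v \<in> prob_simplex"
      unfolding v_def by (rule prob_simplex_segment) (use p p' h in auto)
    then have "g h \<le> g 0" unfolding g_def using max by simp
    with e h show False by auto
  qed
  moreover have "(p' - p) \<bullet> (transpose R *v x + gd) = - L"
    unfolding L_def v_def by (simp add: inner_add_right dot_lmul_matrix inner_commute)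
  ultimately show ?thesis by simp
qed

lemma stage_cost_min_difference_quotient:
  fixes R :: "real^'v::finite^'u::finite"
  assumes D: "continuous_on prob_simplex (\<lambda>p. D p q)"
    and min: "\<forall>z\<in>prob_simplex. stage_cost eps nu D R x q \<le> stage_cost eps nu D R z q"
    and t: "0 < t" and z: "x + t *\<^sub>R w \<in> prob_simplex" and p: "p \<in> prob_simplex"
    and max: "\<forall>p'\<in>prob_simplex.
      adversary_payoff R (\<lambda>p. D p q) (x + t *\<^sub>R w) p' \<le> adversary_payoff R (\<lambda>p. D p q) (x + t *\<^sub>R w) p"
  shows "0 \<le> - (w \<bullet> (R *v p)) + eps * ((nu (x + t *\<^sub>R w) - nu x) / t)"
proof -
  let ?a = "adversary_payoff R (\<lambda>p. D p q)"
  have "?a x p + eps * nu x \<le> stage_cost eps nu D R x q"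
    by (rule adversary_payoff_le_stage_cost[where D=D and q=q, OF D p])
  also have "\<dots> \<le> stage_cost eps nu D R (x + t *\<^sub>R w) q" using min z by blast
  also have "\<dots> = ?a (x + t *\<^sub>R w) p + eps * nu (x + t *\<^sub>R w)"
    by (rule stage_cost_eq_adversary_best_response[where D=D and q=q, OF p max])
  also have "\<dots> = ?a x p - t * (w \<bullet> (R *v p)) + eps * nu (x + t *\<^sub>R w)"
    unfolding adversary_payoff_def by (simp add: inner_add_left)
  finally have "0 \<le> (t * (- (w \<bullet> (R *v p))) + eps * (nu (x + t *\<^sub>R w) - nu x)) / t"
    using t by (simp add: algebra_simps)
  also have "\<dots> = - (w \<bullet> (R *v p)) + eps * ((nu (x + t *\<^sub>R w) - nu x) / t)"
    using t by (simp add: field_simps)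
  finally show ?thesis .
qed

lemma adversary_best_response_limit:
  fixes R :: "real^'v::finite^'u::finite"
  assumes d: "continuous_on prob_simplex d"
    and xs: "xs \<longlonglongrightarrow> x" and ps: "ps \<longlonglongrightarrow> l" and ps_simplex: "\<And>n. ps n \<in> prob_simplex"
    and l: "l \<in> prob_simplex"
    and max: "\<And>n p'. p' \<in> prob_simplex \<Longrightarrow> adversary_payoff R d (xs n) p' \<le> adversary_payoff R d (xs n) (ps n)"
  shows "\<forall>p'\<in>prob_simplex. adversary_payoff R d x p' \<le> adversary_payoff R d x l"
proof
  fix p' :: "real^'v" assume p': "p' \<in> prob_simplex"
  have "(\<lambda>n. d (ps n)) \<longlonglongrightarrow> d l"
    by (rule continuous_on_tendsto_compose[OF d ps l]) (use ps_simplex in auto)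
  moreover have "(\<lambda>n. R *v ps n) \<longlonglongrightarrow> R *v l"
    by (rule bounded_linear.tendsto[OF matrix_vector_mul_bounded_linear ps])
  ultimately have "(\<lambda>n. adversary_payoff R d (xs n) (ps n)) \<longlonglongrightarrow> adversary_payoff R d x l"
    unfolding adversary_payoff_def by (intro tendsto_intros xs)
  moreover have "(\<lambda>n. adversary_payoff R d (xs n) p') \<longlonglongrightarrow> adversary_payoff R d x p'"
    unfolding adversary_payoff_def by (intro tendsto_intros xs)
  ultimately show "adversary_payoff R d x p' \<le> adversary_payoff R d x l"
    by (intro LIMSEQ_le) (use max[OF p'] in auto)
qed

text \<open>Danskin's argument: the maximisers at x + t_n (y - x), t_n = 1/(n+1), have a convergent
  subsequence, and its limit is a maximiser at x that certifies the directional optimality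
  condition of x in the direction y - x.\<close>

lemma stage_cost_min_first_order:
  fixes R :: "real^'v::finite^'u::finite" and x y :: "real^'u" and q :: "real^'v"
  assumes x: "x \<in> prob_simplex" and y: "y \<in> prob_simplex"
    and D: "continuous_on prob_simplex (\<lambda>p. D p q)"
    and nu: "(nu has_derivative (\<lambda>h. gnu \<bullet> h)) (at x)"
    and min: "\<forall>z\<in>prob_simplex. stage_cost eps nu D R x q \<le> stage_cost eps nu D R z q"
  shows "\<exists>p\<in>prob_simplex.
    (\<forall>p'\<in>prob_simplex. adversary_payoff R (\<lambda>p. D p q) x p' \<le> adversary_payoff R (\<lambda>p. D p q) x p)
    \<and> 0 \<le> (y - x) \<bullet> (- (R *v p) + eps *\<^sub>R gnu)"
proof -
  let ?a = "adversary_payoff R (\<lambda>p. D p q)"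
  define w where "w = y - x"
  define t where "t n = inverse (real (Suc n))" for n
  have t: "0 < t n" "t n \<le> 1" for n unfolding t_def by (auto simp: field_simps)
  have xs: "x + t n *\<^sub>R w \<in> prob_simplex" for n
    unfolding w_def by (rule prob_simplex_segment[OF x y]) (use t[of n] in auto)
  have "\<forall>n. \<exists>pn. pn \<in> prob_simplex \<and> (\<forall>p'\<in>prob_simplex. ?a (x + t n *\<^sub>R w) p' \<le> ?a (x + t n *\<^sub>R w) pn)"
    using adversary_best_response_exists[OF D] by blast
  then obtain p where p: "\<And>n. p n \<in> prob_simplex"
      "\<And>n p'. p' \<in> prob_simplex \<Longrightarrow> ?a (x + t n *\<^sub>R w) p' \<le> ?a (x + t n *\<^sub>R w) (p n)"
    by metis
  obtain l r where l: "l \<in> prob_simplex" and r: "strict_mono r" and lim: "(p \<circ> r) \<longlonglongrightarrow> l"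
    using compact_imp_seq_compact[OF compact_prob_simplex] p(1) unfolding seq_compact_def by metis
  have tr: "(\<lambda>n. t (r n)) \<longlonglongrightarrow> 0"
    using LIMSEQ_subseq_LIMSEQ[OF LIMSEQ_inverse_real_of_nat r] by (simp add: o_def t_def)
  have pr: "(\<lambda>n. p (r n)) \<longlonglongrightarrow> l" using lim by (simp add: o_def)
  have max: "\<forall>p'\<in>prob_simplex. ?a x p' \<le> ?a x l"
  proof (rule adversary_best_response_limit[OF D _ pr p(1) l p(2)])
    show "(\<lambda>n. x + t (r n) *\<^sub>R w) \<longlonglongrightarrow> x"
      using tendsto_add[OF tendsto_const tendsto_scaleR[OF tr tendsto_const], of x w] by simp
  qed
  define X where "X s = (nu (x + s *\<^sub>R w) - nu x) / s" for s
  have "(X \<longlongrightarrow> gnu \<bullet> w) (at 0)"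
    using has_derivative_imp_directional_derivative[OF nu, of w]
    unfolding has_field_derivative_iff X_def by simp
  then have "(\<lambda>n. X (t (r n))) \<longlonglongrightarrow> gnu \<bullet> w"
    using tr t(1) unfolding LIMSEQ_SEQ_conv[symmetric] by (metis less_irrefl)
  moreover have "(\<lambda>n. R *v p (r n)) \<longlonglongrightarrow> R *v l"
    by (rule bounded_linear.tendsto[OF matrix_vector_mul_bounded_linear pr])
  moreover have "0 \<le> - (w \<bullet> (R *v p (r n))) + eps * X (t (r n))" for n
    unfolding X_def by (rule stage_cost_min_difference_quotient[OF D min t(1) xs p(1) ballI[OF p(2)]])
  ultimately have "0 \<le> - (w \<bullet> (R *v l)) + eps * (gnu \<bullet> w)"
    by (intro LIMSEQ_le_const[OF tendsto_add[OF tendsto_minus[OF tendsto_inner[OF tendsto_const]]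
          tendsto_mult[OF tendsto_const]]]) auto
  moreover have "(y - x) \<bullet> (- (R *v l) + eps *\<^sub>R gnu) = - (w \<bullet> (R *v l)) + eps * (gnu \<bullet> w)"
    unfolding w_def by (simp add: inner_add_right inner_diff_right inner_commute)
  ultimately have "0 \<le> (y - x) \<bullet> (- (R *v l) + eps *\<^sub>R gnu)" by linarith
  with max l show ?thesis by blast
qed

lemma stage_best_response_variational_inequalities:
  fixes R :: "real^'v::finite^'u::finite" and x y :: "real^'u" and q :: "real^'v"
  assumes x: "x \<in> prob_simplex" and y: "y \<in> prob_simplex"
    and nu: "(nu has_derivative (\<lambda>h. gnu \<bullet> h)) (at x)"
    and D: "\<forall>p\<in>prob_simplex. ((\<lambda>p'. D p' q) has_derivative (\<lambda>h. gD p q \<bullet> h)) (at p)"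
    and min: "\<forall>z\<in>prob_simplex. stage_cost eps nu D R x q \<le> stage_cost eps nu D R z q"
  shows "\<exists>p\<in>prob_simplex. 0 \<le> (y - x) \<bullet> (- (R *v p) + eps *\<^sub>R gnu)
    \<and> (\<forall>p'\<in>prob_simplex. 0 \<le> (p' - p) \<bullet> (transpose R *v x + gD p q))"
proof -
  have "continuous_on prob_simplex (\<lambda>p. D p q)"
    using D by (meson continuous_at_imp_continuous_on has_derivative_continuous)
  then obtain p where p: "p \<in> prob_simplex"
    and max: "\<forall>p'\<in>prob_simplex. adversary_payoff R (\<lambda>p. D p q) x p' \<le> adversary_payoff R (\<lambda>p. D p q) x p"
    and vi: "0 \<le> (y - x) \<bullet> (- (R *v p) + eps *\<^sub>R gnu)"
    using stage_cost_min_first_order[OF x y _ nu min] by blast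
  have "0 \<le> (p' - p) \<bullet> (transpose R *v x + gD p q)" if "p' \<in> prob_simplex" for p'
    using adversary_best_response_first_order[OF p that max] D p by blast
  with p vi show ?thesis by blast
qed

lemma inner_diff_nonpos_of_variational_inequalities:
  fixes a b u v :: "'a::real_inner"
  assumes "0 \<le> (b - a) \<bullet> u" "0 \<le> (a - b) \<bullet> v"
  shows "(a - b) \<bullet> (u - v) \<le> 0"
proof -
  have "(a - b) \<bullet> (u - v) = - ((b - a) \<bullet> u) - (a - b) \<bullet> v"
    by (simp add: inner_diff_left inner_diff_right)
  with assms show ?thesis by simp
qed


section \<open>Equilibria of regular games\<close>

lemma mat1_add_const: "mat1 (\<lambda>s a. Q s a + c) s = mat1 Q s + (\<chi> i j. c)"
  unfolding mat1_def by (simp add: vec_eq_iff)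

lemma mat2_add_const: "mat2 (\<lambda>s a. Q s a + c) s = mat2 Q s + (\<chi> i j. c)"
  unfolding mat2_def by (simp add: vec_eq_iff)

lemma mat1_mono: "Q \<le> Q' \<Longrightarrow> mat1 Q s $ i $ j \<le> mat1 Q' s $ i $ j"
  unfolding mat1_def le_fun_def by simp

lemma mat2_mono: "Q \<le> Q' \<Longrightarrow> mat2 Q s $ i $ j \<le> mat2 Q' s $ i $ j"
  unfolding mat2_def le_fun_def by simp

locale regular_game =
  fixes G :: "('s::finite, 'a1::finite, 'a2::finite) mgame"
    and gnu1 :: "real^'a1 \<Rightarrow> real^'a1" and gnu2 :: "real^'a2 \<Rightarrow> real^'a2"
    and gD1 :: "real^'a2 \<Rightarrow> real^'a2 \<Rightarrow> real^'a2" and gD2 :: "real^'a1 \<Rightarrow> real^'a1 \<Rightarrow> real^'a1"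
    and alpha :: real
  assumes discount: "0 \<le> disc G" "disc G < 1"
    and trans_simplex: "\<And>s a. trans G s a \<in> prob_simplex"
    and Denv_nonneg: "\<And>P P'. P \<in> prob_simplex \<Longrightarrow> P' \<in> prob_simplex \<Longrightarrow> 0 \<le> Denv1 G P P' \<and> 0 \<le> Denv2 G P P'"
    and nu1_deriv: "\<And>x. x \<in> prob_simplex \<Longrightarrow> (nu1 G has_derivative (\<lambda>h. gnu1 x \<bullet> h)) (at x)"
    and nu2_deriv: "\<And>x. x \<in> prob_simplex \<Longrightarrow> (nu2 G has_derivative (\<lambda>h. gnu2 x \<bullet> h)) (at x)"
    and D1_deriv: "\<And>p q. p \<in> prob_simplex \<Longrightarrow> q \<in> prob_simplex \<Longrightarrow>
      ((\<lambda>p'. D1 G p' q) has_derivative (\<lambda>h. gD1 p q \<bullet> h)) (at p)"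
    and D2_deriv: "\<And>p q. p \<in> prob_simplex \<Longrightarrow> q \<in> prob_simplex \<Longrightarrow>
      ((\<lambda>p'. D2 G p' q) has_derivative (\<lambda>h. gD2 p q \<bullet> h)) (at p)"
    and monotone: "alpha > 0" "strongly_monotone G gnu1 gnu2 gD1 gD2 alpha"
begin

lemma is_RQE_variational_inequalities:
  assumes RQE: "is_RQE G R1 R2 x1 x2" and y1: "y1 \<in> prob_simplex" and y2: "y2 \<in> prob_simplex"
  obtains p1 p2 where "p1 \<in> prob_simplex" "p2 \<in> prob_simplex"
    "0 \<le> (y1 - x1) \<bullet> (- (R1 *v p1) + eps1 G *\<^sub>R gnu1 x1)"
    "0 \<le> (y2 - x2) \<bullet> (- (R2 *v p2) + eps2 G *\<^sub>R gnu2 x2)"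
    "\<forall>p'\<in>prob_simplex. 0 \<le> (p' - p1) \<bullet> (transpose R1 *v x1 + gD1 p1 x2)"
    "\<forall>p'\<in>prob_simplex. 0 \<le> (p' - p2) \<bullet> (transpose R2 *v x2 + gD2 p2 x1)"
proof -
  have x1: "x1 \<in> prob_simplex" and x2: "x2 \<in> prob_simplex"
    and min1: "\<forall>z\<in>prob_simplex. stage_cost (eps1 G) (nu1 G) (D1 G) R1 x1 x2 \<le> stage_cost (eps1 G) (nu1 G) (D1 G) R1 z x2"
    and min2: "\<forall>z\<in>prob_simplex. stage_cost (eps2 G) (nu2 G) (D2 G) R2 x2 x1 \<le> stage_cost (eps2 G) (nu2 G) (D2 G) R2 z x1"
    using RQE unfolding is_RQE_def f1_def f2_def by auto
  have "\<forall>p\<in>prob_simplex. ((\<lambda>p'. D1 G p' x2) has_derivative (\<lambda>h. gD1 p x2 \<bullet> h)) (at p)"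
    and "\<forall>p\<in>prob_simplex. ((\<lambda>p'. D2 G p' x1) has_derivative (\<lambda>h. gD2 p x1 \<bullet> h)) (at p)"
    using D1_deriv D2_deriv x1 x2 by blast+
  then show ?thesis
    using that
      stage_best_response_variational_inequalities[OF x1 y1 nu1_deriv[OF x1] _ min1]
      stage_best_response_variational_inequalities[OF x2 y2 nu2_deriv[OF x2] _ min2]
    by blast
qed

lemma is_RQE_unique:
  assumes X: "is_RQE G R1 R2 x1 x2" and Y: "is_RQE G R1 R2 y1 y2"
  shows "x1 = y1 \<and> x2 = y2"
proof -
  have x: "x1 \<in> prob_simplex" "x2 \<in> prob_simplex" and y: "y1 \<in> prob_simplex" "y2 \<in> prob_simplex"
    using X Y unfolding is_RQE_def by auto
  obtain p1 p2 where p: "p1 \<in> prob_simplex" "p2 \<in> prob_simplex"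
    and a1: "0 \<le> (y1 - x1) \<bullet> (- (R1 *v p1) + eps1 G *\<^sub>R gnu1 x1)"
    and a2: "0 \<le> (y2 - x2) \<bullet> (- (R2 *v p2) + eps2 G *\<^sub>R gnu2 x2)"
    and c1: "\<forall>p'\<in>prob_simplex. 0 \<le> (p' - p1) \<bullet> (transpose R1 *v x1 + gD1 p1 x2)"
    and c2: "\<forall>p'\<in>prob_simplex. 0 \<le> (p' - p2) \<bullet> (transpose R2 *v x2 + gD2 p2 x1)"
    by (rule is_RQE_variational_inequalities[OF X y])
  obtain q1 q2 where q: "q1 \<in> prob_simplex" "q2 \<in> prob_simplex"
    and b1: "0 \<le> (x1 - y1) \<bullet> (- (R1 *v q1) + eps1 G *\<^sub>R gnu1 y1)"
    and b2: "0 \<le> (x2 - y2) \<bullet> (- (R2 *v q2) + eps2 G *\<^sub>R gnu2 y2)"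
    and d1: "\<forall>p'\<in>prob_simplex. 0 \<le> (p' - q1) \<bullet> (transpose R1 *v y1 + gD1 q1 y2)"
    and d2: "\<forall>p'\<in>prob_simplex. 0 \<le> (p' - q2) \<bullet> (transpose R2 *v y2 + gD2 q2 y1)"
    by (rule is_RQE_variational_inequalities[OF Y x])
  define N where "N = (norm (x1 - y1))\<^sup>2 + (norm (x2 - y2))\<^sup>2 + (norm (p1 - q1))\<^sup>2 + (norm (p2 - q2))\<^sup>2"
  have "alpha * N
     \<le> (x1 - y1) \<bullet> ((- (R1 *v p1) + eps1 G *\<^sub>R gnu1 x1) - (- (R1 *v q1) + eps1 G *\<^sub>R gnu1 y1))
     + (x2 - y2) \<bullet> ((- (R2 *v p2) + eps2 G *\<^sub>R gnu2 x2) - (- (R2 *v q2) + eps2 G *\<^sub>R gnu2 y2))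
     + (p1 - q1) \<bullet> ((transpose R1 *v x1 + gD1 p1 x2) - (transpose R1 *v y1 + gD1 q1 y2))
     + (p2 - q2) \<bullet> ((transpose R2 *v x2 + gD2 p2 x1) - (transpose R2 *v y2 + gD2 q2 y1))"
    using monotone(2)[unfolded strongly_monotone_def, THEN spec[of _ R1], THEN spec[of _ R2]] x y p q
    unfolding N_def by blast
  also have "\<dots> \<le> 0"
    using inner_diff_nonpos_of_variational_inequalities[OF a1 b1]
      inner_diff_nonpos_of_variational_inequalities[OF a2 b2]
      inner_diff_nonpos_of_variational_inequalities[OF bspec[OF c1 q(1)] bspec[OF d1 p(1)]]
      inner_diff_nonpos_of_variational_inequalities[OF bspec[OF c2 q(2)] bspec[OF d2 p(2)]]
    by linarith
  finally have "N \<le> 0" using monotone(1) by (simp add: mult_le_0_iff)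
  then have "(norm (x1 - y1))\<^sup>2 \<le> 0" "(norm (x2 - y2))\<^sup>2 \<le> 0"
    unfolding N_def by (smt (verit) zero_le_power2)+
  then show ?thesis by simp
qed

lemma RQE_values_eq:
  assumes "is_RQE G R1 R2 x1 x2"
  shows "RQE1 G R1 R2 = f1 G R1 x1 x2" and "RQE2 G R1 R2 = f2 G R2 x2 x1"
proof -
  have "(THE x. is_RQE G R1 R2 (fst x) (snd x)) = (x1, x2)"
  proof (rule the_equality)
    fix x assume "is_RQE G R1 R2 (fst x) (snd x)"
    then show "x = (x1, x2)" using is_RQE_unique[OF assms] by (simp add: prod_eq_iff)
  qed (simp add: assms)
  then show "RQE1 G R1 R2 = f1 G R1 x1 x2" and "RQE2 G R1 R2 = f2 G R2 x2 x1"
    unfolding RQE1_def RQE2_def by simp_all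
qed

lemma bellman_eq_policy_eval_op:
  assumes "\<And>s. is_RQE G (mat1 Q1 s) (mat2 Q2 s) (pi1 s) (pi2 s)"
  shows "bellman G (Q1, Q2) =
    (policy_eval_op (disc G) (rew1 G) (trans G) (Denv1 G) mat1 (f1 G) pi1 pi2 Q1,
     policy_eval_op (disc G) (rew2 G) (trans G) (Denv2 G) mat2 (f2 G) pi2 pi1 Q2)"
  unfolding bellman_def policy_eval_op_def robust_expectation_def
  by (simp add: RQE_values_eq[OF assms] sum_negf)

sublocale player1: robust_player "disc G" "rew1 G" "trans G" "Denv1 G" mat1 "eps1 G" "nu1 G" "D1 G"
proof unfold_locales
  show "\<And>s a. \<forall>P'\<in>prob_simplex. 0 \<le> Denv1 G P' (trans G s a)"
    using Denv_nonneg trans_simplex by blast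
  show "continuous_on prob_simplex (\<lambda>p. D1 G p q)" if "q \<in> prob_simplex" for q
    using D1_deriv that by (meson continuous_at_imp_continuous_on has_derivative_continuous)
qed (simp_all add: discount mat1_add_const mat1_mono)

sublocale player2: robust_player "disc G" "rew2 G" "trans G" "Denv2 G" mat2 "eps2 G" "nu2 G" "D2 G"
proof unfold_locales
  show "\<And>s a. \<forall>P'\<in>prob_simplex. 0 \<le> Denv2 G P' (trans G s a)"
    using Denv_nonneg trans_simplex by blast
  show "continuous_on prob_simplex (\<lambda>p. D2 G p q)" if "q \<in> prob_simplex" for q
    using D2_deriv that by (meson continuous_at_imp_continuous_on has_derivative_continuous)
qed (simp_all add: discount mat2_add_const mat2_mono)

lemma is_markov_RQE_of_bellman_fixpoint:
  assumes fixpoint: "bellman G (Q1, Q2) = (Q1, Q2)"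
    and RQE: "\<And>s. is_RQE G (mat1 Q1 s) (mat2 Q2 s) (pi1 s) (pi2 s)"
  shows "is_markov_RQE G pi1 pi2"
proof -
  have pi: "markov_policy pi1" "markov_policy pi2"
    using RQE unfolding is_RQE_def markov_policy_def by auto
  have "policy_eval_op (disc G) (rew1 G) (trans G) (Denv1 G) mat1 (f1 G) pi1 pi2 Q1 = Q1"
    and "policy_eval_op (disc G) (rew2 G) (trans G) (Denv2 G) mat2 (f2 G) pi2 pi1 Q2 = Q2"
    using fixpoint unfolding bellman_eq_policy_eval_op[OF RQE] by simp_all
  then show ?thesis
    unfolding is_markov_RQE_def V1_def V2_def
    using pi player1.polV_best_response[OF pi(1) _ pi(2)] player2.polV_best_response[OF pi(2) _ pi(1)] RQE
    by (auto simp: is_RQE_def f1_def f2_def)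
qed

end

theorem proposition3:
  fixes G :: "('s::finite, 'a1::finite, 'a2::finite) mgame"
    and gnu1 :: "real^'a1 \<Rightarrow> real^'a1" and gnu2 :: "real^'a2 \<Rightarrow> real^'a2"
    and gD1 :: "real^'a2 \<Rightarrow> real^'a2 \<Rightarrow> real^'a2" and gD2 :: "real^'a1 \<Rightarrow> real^'a1 \<Rightarrow> real^'a1"
    and U1 :: "(real^'a1) set" and U2 :: "(real^'a2) set"
    and W1 :: "((real^'a2) \<times> (real^'a2)) set" and W2 :: "((real^'a1) \<times> (real^'a1)) set"
    and alpha :: real
    and Qs :: "('s \<Rightarrow> 'a1 \<times> 'a2 \<Rightarrow> real) \<times> ('s \<Rightarrow> 'a1 \<times> 'a2 \<Rightarrow> real)"
    and pi1 :: "'s \<Rightarrow> real^'a1" and pi2 :: "'s \<Rightarrow> real^'a2"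
  assumes rew1: "\<forall>s a. 0 \<le> rew1 G s a \<and> rew1 G s a \<le> 1"
    and rew2: "\<forall>s a. 0 \<le> rew2 G s a \<and> rew2 G s a \<le> 1"
    and disc: "0 \<le> disc G" "disc G < 1"
    and trans: "\<forall>s a. trans G s a \<in> prob_simplex"
    and eps: "eps1 G > 0" "eps2 G > 0"
    and nu1: "open U1" "prob_simplex \<subseteq> U1" "strictly_convex_on U1 (nu1 G)"
             "\<forall>x\<in>U1. (nu1 G has_derivative (\<lambda>h. gnu1 x \<bullet> h)) (at x)"
    and nu2: "open U2" "prob_simplex \<subseteq> U2" "strictly_convex_on U2 (nu2 G)"
             "\<forall>x\<in>U2. (nu2 G has_derivative (\<lambda>h. gnu2 x \<bullet> h)) (at x)"
    and D1: "open W1" "prob_simplex \<times> prob_simplex \<subseteq> W1"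
            "\<forall>z\<in>W1. (\<lambda>(p, q). D1 G p q) differentiable (at z)"
            "\<forall>(p, q)\<in>W1. ((\<lambda>p'. D1 G p' q) has_derivative (\<lambda>h. gD1 p q \<bullet> h)) (at p)"
            "\<forall>q\<in>prob_simplex. convex_on prob_simplex (\<lambda>p. D1 G p q)"
    and D2: "open W2" "prob_simplex \<times> prob_simplex \<subseteq> W2"
            "\<forall>z\<in>W2. (\<lambda>(p, q). D2 G p q) differentiable (at z)"
            "\<forall>(p, q)\<in>W2. ((\<lambda>p'. D2 G p' q) has_derivative (\<lambda>h. gD2 p q \<bullet> h)) (at p)"
            "\<forall>q\<in>prob_simplex. convex_on prob_simplex (\<lambda>p. D2 G p q)"
    and Denv: "\<forall>P\<in>prob_simplex. \<forall>P'\<in>prob_simplex. 0 \<le> Denv1 G P P' \<and> 0 \<le> Denv2 G P P'"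
    and mono: "alpha > 0" "strongly_monotone G gnu1 gnu2 gD1 gD2 alpha"
    and fixpt: "bellman G Qs = Qs"
    and fixpt_unique: "\<forall>Q. bellman G Q = Q \<longrightarrow> Q = Qs"
    and pistar: "\<forall>s. is_RQE G (mat1 (fst Qs) s) (mat2 (snd Qs) s) (pi1 s) (pi2 s)"
  shows "is_markov_RQE G pi1 pi2"
proof -
  interpret regular_game G gnu1 gnu2 gD1 gD2 alpha
    using disc trans Denv nu1(2,4) nu2(2,4) D1(2,4) D2(2,4) mono by unfold_locales blast+
  obtain Q1 Q2 where "Qs = (Q1, Q2)" by fastforce
  with fixpt pistar show ?thesis
    using is_markov_RQE_of_bellman_fixpoint by simp
qed

end
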